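(* Let $d\ge1$, $Q_d=[0,1]^d$, $a>0$, and for $n\ge1$ define $C_n$ on $\mathscr{L}^1(Q_d)$ by $$C_n(f)(x)=\sum_{h\in\{0,\dots,n\}^d}P_{n,h}(x)\int_{Q_d}f\Big(\frac{h+au}{n+a}\Big)\,du\qquad(x\in Q_d).$$ If $f\in\mathscr{L}^p(Q_d)$ with $1\le p<+\infty$, then $C_n(f)\to f$ in $\mathscr{L}^p(Q_d)$ as $n\to\infty$.
   Context: For $h=(h_1,\dots,h_d)\in\{0,\dots,n\}^d$ and $x\in Q_d$, $P_{n,h}(x)=\prod_{i=1}^d\binom{n}{h_i}x_i^{h_i}(1-x_i)^{n-h_i}$. $\mathscr{L}^p(Q_d)$ is taken with respect to Lebesgue measure; $du$ denotes Lebesgue measure on $Q_d$. *)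

theory Defs
  imports "HOL-Analysis.Analysis"
begin

definition cube :: "(real ^ 'd) set" where
  "cube = cbox 0 One"

definition multi_idx :: "nat \<Rightarrow> ('d::finite \<Rightarrow> nat) set" where
  "multi_idx n = {h. \<forall>i. h i \<le> n}"

definition bern :: "nat \<Rightarrow> ('d::finite \<Rightarrow> nat) \<Rightarrow> real ^ 'd \<Rightarrow> real" where
  "bern n h x = (\<Prod>i\<in>UNIV. real (n choose h i) * (x $ i) ^ (h i) * (1 - x $ i) ^ (n - h i))"

definition Cop :: "real \<Rightarrow> nat \<Rightarrow> (real ^ 'd::finite \<Rightarrow> real) \<Rightarrow> real ^ 'd \<Rightarrow> real" where
  "Cop a n f x = (\<Sum>h\<in>multi_idx n. bern n h x *
      (LINT u|lebesgue_on cube. f (\<chi> i. (real (h i) + a * u $ i) / (real n + a))))"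

end

theory Submission
  imports Defs "HOL-Probability.Probability_Measure"
begin

text \<open>
  For continuous \<open>g\<close>, \<open>C\<^sub>n g x\<close> averages \<open>g\<close> over the boxes \<open>(h + a Q\<^sub>d)/(n + a)\<close> with the
  Bernstein weights \<open>P\<^sub>n\<^sub>,\<^sub>h(x)\<close>.  These weights concentrate near \<open>h = n x\<close> (the \<open>i\<close>-th coordinate
  has variance \<open>n x\<^sub>i (1 - x\<^sub>i)\<close>) and the boxes shrink, so \<open>C\<^sub>n g \<rightarrow> g\<close> uniformly on \<open>Q\<^sub>d\<close>.
  For general \<open>\<phi>\<close>, Jensen's inequality, the affine change of variables onto the boxes, the
  identity \<open>\<integral> P\<^sub>n\<^sub>,\<^sub>h = (n + 1)\<^sup>-\<^sup>d\<close> and the fact that every point lies in at most \<open>(a + 1)\<^sup>d\<close> of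
  the boxes give \<open>\<parallel>C\<^sub>n \<phi>\<parallel>\<^sub>p\<^sup>p \<le> ((a + 1)\<^sup>2/a)\<^sup>d \<parallel>\<phi>\<parallel>\<^sub>p\<^sup>p\<close> uniformly in \<open>n\<close>.  Approximating \<open>f\<close> in
  \<open>L\<^sup>p\<close> by a continuous function and using linearity of \<open>C\<^sub>n\<close> finishes the proof.
\<close>

section \<open>The tensor-product Bernstein basis\<close>

lemma multi_idx_eq_PiE: "multi_idx n = PiE UNIV (\<lambda>_. {..n})"
  by (auto simp: multi_idx_def PiE_def extensional_def)

lemma finite_multi_idx [simp]: "finite (multi_idx n)"
  by (simp add: multi_idx_eq_PiE finite_PiE)

lemma multi_idx_not_empty [simp]: "multi_idx n \<noteq> {}"
  by (auto simp: multi_idx_def intro!: exI[of _ "\<lambda>_. 0"])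

lemma sum_multi_idx_prod:
  fixes F :: "'d::finite \<Rightarrow> nat \<Rightarrow> 'c::comm_semiring_1"
  shows "(\<Sum>h\<in>multi_idx n. \<Prod>i\<in>UNIV. F i (h i)) = (\<Prod>i\<in>UNIV. \<Sum>k\<le>n. F i k)"
  by (simp add: multi_idx_eq_PiE prod_sum_PiE)

lemma bern_eq_prod_Bernstein: "bern n h x = (\<Prod>i\<in>UNIV. Bernstein n (h i) (x $ i))"
  by (simp add: bern_def Bernstein_def)

lemma One_vec_nth: "(One :: real ^ 'n::finite) $ i = 1"
proof -
  have "axis i (1::real) \<in> Basis"
    by simp
  then show ?thesis
    by (simp add: cart_eq_inner_axis inner_sum_left inner_Basis sum.delta')
qed

lemma mem_cube_iff: "x \<in> cube \<longleftrightarrow> (\<forall>i. 0 \<le> x $ i \<and> x $ i \<le> 1)"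
  unfolding cube_def mem_box_cart One_vec_nth by simp

lemma bern_nonneg: "x \<in> cube \<Longrightarrow> 0 \<le> bern n h x"
  unfolding bern_eq_prod_Bernstein by (intro prod_nonneg Bernstein_nonneg) (auto simp: mem_cube_iff)

lemma continuous_on_bern [continuous_intros]: "continuous_on S (bern n h)"
  unfolding bern_def by (intro continuous_intros)

lemma sum_bern [simp]: "(\<Sum>h\<in>multi_idx n. bern n h x) = 1"
  using sum_multi_idx_prod[of "\<lambda>i k. Bernstein n k (x $ i)" n] by (simp add: bern_eq_prod_Bernstein)

lemma sum_bern_coordinate:
  "(\<Sum>h\<in>multi_idx n. bern n h x * G (h j)) = (\<Sum>k\<le>n. Bernstein n k (x $ j) * G k)"
proof -
  define F where "F i k = Bernstein n k (x $ i) * (if i = j then G k else 1)" for i k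
  have "bern n h x * G (h j) = (\<Prod>i\<in>UNIV. F i (h i))" for h
    by (simp add: F_def bern_eq_prod_Bernstein prod.distrib)
  then have "(\<Sum>h\<in>multi_idx n. bern n h x * G (h j)) = (\<Prod>i\<in>UNIV. \<Sum>k\<le>n. F i k)"
    by (simp add: sum_multi_idx_prod)
  also have "\<dots> = (\<Prod>i\<in>UNIV. if i = j then (\<Sum>k\<le>n. Bernstein n k (x $ j) * G k) else 1)"
    by (intro prod.cong) (auto simp: F_def)
  finally show ?thesis
    by simp
qed

lemma sum_Bernstein_variance:
  "(\<Sum>k\<le>n. Bernstein n k t * (real k - real n * t)\<^sup>2) = real n * t * (1 - t)"
proof -
  have "(\<Sum>k\<le>n. Bernstein n k t * (real k - real n * t)\<^sup>2) =
     (\<Sum>k\<le>n. real k * (real k - 1) * Bernstein n k t + (1 - 2 * real n * t) * (real k * Bernstein n k t)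
      + (real n * t)\<^sup>2 * Bernstein n k t)"
    by (rule sum.cong) (simp_all add: power2_eq_square algebra_simps)
  also have "\<dots> =
     (\<Sum>k\<le>n. real k * (real k - 1) * Bernstein n k t) + (1 - 2 * real n * t) * (\<Sum>k\<le>n. real k * Bernstein n k t)
      + (real n * t)\<^sup>2 * (\<Sum>k\<le>n. Bernstein n k t)"
    by (simp add: sum.distrib flip: sum_distrib_left)
  also have "\<dots> = real n * t * (1 - t)"
    by (simp only: sum_kk_Bernstein sum_k_Bernstein sum_Bernstein) (simp add: power2_eq_square algebra_simps)
  finally show ?thesis .
qed

lemma sum_bern_variance:
  "(\<Sum>h\<in>multi_idx n. bern n h x * (real (h j) - real n * x $ j)\<^sup>2) = real n * x $ j * (1 - x $ j)"
  using sum_bern_coordinate[of n x "\<lambda>k. (real k - real n * x $ j)\<^sup>2" j] by (simp add: sum_Bernstein_variance)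

lemma cube_in_sets_lebesgue [simp]: "cube \<in> sets lebesgue"
  by (simp add: cube_def)

lemma lmeasurable_cube: "cube \<in> lmeasurable"
  by (simp add: cube_def)

lemma emeasure_cube: "emeasure lebesgue cube = 1"
  by (simp add: cube_def emeasure_lborel_cbox_eq inner_diff_left)

lemma prob_space_cube: "prob_space (lebesgue_on cube)"
  by (rule prob_space_restrict_space) (auto simp: emeasure_cube)

lemma integrable_continuous_on_cube:
  "continuous_on cube g \<Longrightarrow> integrable (lebesgue_on cube) (g :: real ^ 'd::finite \<Rightarrow> real)"
  using continuous_imp_integrable[of 0 One g] by (simp add: cube_def)

lemma integrable_abs_powr_continuous_on_cube:
  fixes g :: "real ^ 'd::finite \<Rightarrow> real"
  assumes "continuous_on cube g" "p > 0"
  shows "integrable (lebesgue_on cube) (\<lambda>x. \<bar>g x\<bar> powr p)"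
proof (rule integrable_continuous_on_cube, rule continuous_on_powr')
  show "continuous_on cube (\<lambda>x. \<bar>g x\<bar>)"
    using assms(1) by (rule continuous_on_rabs)
qed (use assms(2) in auto)

lemma measure_cube [simp]: "measure (lebesgue_on (cube :: (real ^ 'd::finite) set)) cube = 1"
  using prob_space.prob_space[OF prob_space_cube] by simp

lemma borel_measurable_continuous_on_cube:
  "continuous_on cube g \<Longrightarrow> (g :: real ^ 'd::finite \<Rightarrow> real) \<in> borel_measurable (lebesgue_on cube)"
  by (rule continuous_imp_measurable_on_sets_lebesgue) auto

lemma indicator_cbox_cart:
  fixes l u y :: "real ^ 'n::finite"
  shows "indicator (cbox l u) y = (\<Prod>i\<in>UNIV. indicator {l $ i..u $ i} (y $ i) :: real)"
proof (cases "y \<in> cbox l u")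
  case False
  then obtain i where "y $ i \<notin> {l $ i..u $ i}"
    by (auto simp: mem_box_cart)
  with False show ?thesis
    by (auto simp: prod_zero_iff intro!: exI[of _ i])
qed (simp add: mem_box_cart)

lemma indicator_cube_cart: "indicator cube x = (\<Prod>i\<in>UNIV. indicator {0..1} (x $ i) :: real)"
  unfolding cube_def indicator_cbox_cart One_vec_nth by simp

section \<open>Convexity of the \<open>p\<close>-th power\<close>

lemma convex_on_powr_nonneg:
  assumes "p \<ge> 1" shows "convex_on {0..} (\<lambda>s::real. s powr p)"
proof (rule convex_onI)
  fix t x y :: real assume t: "0 < t" "t < 1" and x: "x \<in> {0..}" and y: "y \<in> {0..}"
  have tp: "s powr p \<le> s" if "0 < s" "s < 1" for s :: real
    using that assms powr_mono'[of 1 p s] by simp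
  show "((1 - t) *\<^sub>R x + t *\<^sub>R y) powr p \<le> (1 - t) * x powr p + t * y powr p"
  proof (cases "x = 0 \<or> y = 0")
    case True
    then show ?thesis
      using t x y tp[of t] tp[of "1 - t"] by (auto simp: powr_mult intro!: mult_right_mono)
  next
    case False
    with x y have "x \<in> {0<..}" "y \<in> {0<..}" by auto
    from convex_onD[OF powr_convex[OF assms] _ _ this] t show ?thesis by simp
  qed
qed simp

lemma convex_on_abs_powr:
  assumes "p \<ge> 1" shows "convex_on UNIV (\<lambda>s::real. \<bar>s\<bar> powr p)"
proof (rule convex_onI)
  fix t x y :: real assume t: "0 < t" "t < 1"
  have "\<bar>(1 - t) *\<^sub>R x + t *\<^sub>R y\<bar> powr p \<le> ((1 - t) *\<^sub>R \<bar>x\<bar> + t *\<^sub>R \<bar>y\<bar>) powr p"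
    using t assms by (intro powr_mono2) (auto simp: abs_mult intro: order.trans[OF abs_triangle_ineq])
  also have "\<dots> \<le> (1 - t) * \<bar>x\<bar> powr p + t * \<bar>y\<bar> powr p"
    using convex_onD[OF convex_on_powr_nonneg[OF assms], of t "\<bar>x\<bar>" "\<bar>y\<bar>"] t by simp
  finally show "\<bar>(1 - t) *\<^sub>R x + t *\<^sub>R y\<bar> powr p \<le> (1 - t) * \<bar>x\<bar> powr p + t * \<bar>y\<bar> powr p" .
qed simp

lemma abs_sum_powr_le:
  fixes x :: "'i \<Rightarrow> real"
  assumes I: "finite I" "I \<noteq> {}" and p: "p \<ge> 1"
  shows "\<bar>\<Sum>i\<in>I. x i\<bar> powr p \<le> real (card I) powr (p - 1) * (\<Sum>i\<in>I. \<bar>x i\<bar> powr p)"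
proof -
  define m where "m = real (card I)"
  have m: "m > 0" using I by (simp add: m_def card_gt_0_iff)
  have "\<bar>\<Sum>i\<in>I. (1 / m) *\<^sub>R x i\<bar> powr p \<le> (\<Sum>i\<in>I. (1 / m) * \<bar>x i\<bar> powr p)"
    using m by (intro convex_on_sum[OF I convex_on_abs_powr[OF p]]) (auto simp: m_def)
  then have "\<bar>\<Sum>i\<in>I. x i\<bar> powr p / m powr p \<le> (\<Sum>i\<in>I. \<bar>x i\<bar> powr p) / m"
    using m by (simp add: powr_divide flip: sum_distrib_left sum_divide_distrib)
  then show ?thesis
    using m by (simp add: divide_le_eq powr_diff field_simps m_def)
qed

lemma abs_add3_powr_le:
  fixes x y z p :: real
  assumes "p \<ge> 1"
  shows "\<bar>x + y + z\<bar> powr p \<le> 3 powr (p - 1) * (\<bar>x\<bar> powr p + \<bar>y\<bar> powr p + \<bar>z\<bar> powr p)"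
  using abs_sum_powr_le[of "{0, 1, 2 :: nat}" p "\<lambda>i. [x, y, z] ! i"] assms by (simp add: add.assoc)

lemma abs_integral_powr_le:
  fixes X :: "'a \<Rightarrow> real"
  assumes "prob_space M" "p \<ge> 1" "integrable M X" "integrable M (\<lambda>x. \<bar>X x\<bar> powr p)"
  shows "\<bar>integral\<^sup>L M X\<bar> powr p \<le> integral\<^sup>L M (\<lambda>x. \<bar>X x\<bar> powr p)"
proof -
  interpret prob_space M by fact
  show ?thesis
    by (rule jensens_inequality[where I=UNIV and q="\<lambda>s. \<bar>s\<bar> powr p"])
      (use assms convex_on_abs_powr in auto)
qed

lemma integrable_if_integrable_abs_powr:
  fixes g :: "'a \<Rightarrow> real"
  assumes "finite_measure M" "p \<ge> 1" "g \<in> borel_measurable M" "integrable M (\<lambda>x. \<bar>g x\<bar> powr p)"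
  shows "integrable M g"
proof -
  interpret finite_measure M by fact
  have "\<bar>y\<bar> \<le> 1 + \<bar>y\<bar> powr p" for y :: real
  proof (cases "\<bar>y\<bar> \<le> 1")
    case False
    then have "\<bar>y\<bar> powr 1 \<le> \<bar>y\<bar> powr p" using assms(2) by (intro powr_mono) auto
    then show ?thesis using False by simp
  qed (simp add: add_increasing2)
  then have "AE x in M. norm (g x) \<le> norm (1 + \<bar>g x\<bar> powr p)"
    by (auto intro!: AE_I2 simp: abs_le_iff)
  moreover have "integrable M (\<lambda>x. 1 + \<bar>g x\<bar> powr p)"
    using assms(4) by simp
  ultimately show ?thesis
    using Bochner_Integration.integrable_bound assms(3) by blast
qed

lemma prod_Basis_cart:
  "(\<Prod>b\<in>(Basis :: (real ^ 'n::finite) set). G b) = (\<Prod>i\<in>UNIV. G (axis i 1))"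
proof -
  have Basis_eq: "(Basis :: (real ^ 'n) set) = (\<lambda>i. axis i 1) ` UNIV"
    by (auto simp: Basis_vec_def)
  have "inj (\<lambda>i::'n. axis i (1::real))"
    by (auto simp: inj_on_def axis_eq_axis)
  then show ?thesis
    unfolding Basis_eq by (simp add: prod.reindex)
qed

lemma nn_integral_lborel_prod_cart:
  fixes g :: "'n::finite \<Rightarrow> real \<Rightarrow> ennreal"
  assumes [measurable]: "\<And>i. g i \<in> borel_measurable borel"
  shows "(\<integral>\<^sup>+x. (\<Prod>i\<in>UNIV. g i (x $ i)) \<partial>(lborel :: (real ^ 'n) measure)) = (\<Prod>i\<in>UNIV. \<integral>\<^sup>+t. g i t \<partial>lborel)"
proof -
  define f where "f b = g (SOME i. b = axis i 1)" for b :: "real ^ 'n"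
  have f_axis: "f (axis i 1) = g i" for i
    unfolding f_def by (rule arg_cong[where f=g], rule some_equality) (auto simp: axis_eq_axis)
  have "(\<integral>\<^sup>+x. (\<Prod>i\<in>UNIV. g i (x $ i)) \<partial>(lborel :: (real ^ 'n) measure)) = (\<integral>\<^sup>+x. (\<Prod>b\<in>Basis. f b (x \<bullet> b)) \<partial>lborel)"
    by (simp add: prod_Basis_cart f_axis cart_eq_inner_axis)
  also have "\<dots> = (\<Prod>b\<in>Basis. \<integral>\<^sup>+t. f b t \<partial>lborel)"
    by (rule nn_integral_lborel_prod) (simp_all add: f_def)
  finally show ?thesis
    by (simp add: prod_Basis_cart f_axis)
qed

lemma Beta_of_nat: "Beta (real k + 1) (real m + 1) = fact k * fact m / fact (k + m + 1)"
proof -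
  have "Gamma (real j + 1) = fact j" for j
    using Gamma_fact[of j] by (simp add: add.commute)
  from this[of k] this[of m] this[of "k + m + 1"] show ?thesis
    by (simp add: Beta_def add_ac)
qed

lemma Bernstein_has_integral:
  assumes "k \<le> n"
  shows "(Bernstein n k has_integral 1 / (real n + 1)) {0..1}"
proof -
  have "((\<lambda>t. t powr real k * (1 - t) powr real (n - k)) has_integral fact k * fact (n - k) / fact (n + 1)) {0..1}"
    using has_integral_Beta_real[of "real k + 1" "real (n - k) + 1"] Beta_of_nat[of k "n - k"] assms by simp
  then have "((\<lambda>t. real (n choose k) * (t powr real k * (1 - t) powr real (n - k))) has_integral
          real (n choose k) * (fact k * fact (n - k) / fact (n + 1))) {0..1}"
    by (rule has_integral_mult_right)
  moreover have "real (n choose k) * (fact k * fact (n - k) / fact (n + 1)) = fact n / fact (n + 1)"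
    using binomial_fact_lemma[OF assms]
    by (metis (mono_tags, lifting) mult.commute of_nat_fact of_nat_mult times_divide_eq_right)
  moreover have "fact (n + 1) = (real n + 1) * fact n"
    by simp
  ultimately have "((\<lambda>t. real (n choose k) * (t powr real k * (1 - t) powr real (n - k))) has_integral 1 / (real n + 1)) {0..1}"
    by (simp add: add.commute)
  then show ?thesis
    by (rule has_integral_spike_finite[of "{0, 1}", rotated 2]) (auto simp: Bernstein_def powr_realpow)
qed

lemma integral_bern_cube:
  fixes h :: "'d::finite \<Rightarrow> nat"
  assumes "h \<in> multi_idx n"
  shows "(LINT x|lebesgue_on cube. bern n h x) = (1 / (real n + 1)) ^ CARD('d)"
proof -
  have Bernstein_nn: "(\<integral>\<^sup>+t. ennreal (indicator {0..1} t * Bernstein n (h i) t) \<partial>lborel) = ennreal (1 / (real n + 1))" for i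
    using assms by (intro nn_integral_has_integral_lebesgue Bernstein_has_integral)
      (auto intro: Bernstein_nonneg simp: multi_idx_def)
  have "(\<integral>\<^sup>+x. ennreal (bern n h x) \<partial>lebesgue_on cube) = (\<integral>\<^sup>+x. ennreal (indicator cube x * bern n h x) \<partial>lborel)"
    by (simp add: nn_integral_restrict_space nn_integral_completion mult.commute indicator_mult_ennreal)
  also have "\<dots> = (\<integral>\<^sup>+x. (\<Prod>i\<in>UNIV. ennreal (indicator {0..1} (x $ i) * Bernstein n (h i) (x $ i))) \<partial>lborel)"
  proof (intro nn_integral_cong)
    have "0 \<le> indicator {0..1} t * Bernstein n k t" for k t
      by (simp add: indicator_def Bernstein_nonneg)
    then show "ennreal (indicator cube x * bern n h x) =
        (\<Prod>i\<in>UNIV. ennreal (indicator {0..1} (x $ i) * Bernstein n (h i) (x $ i)))" for x :: "real ^ 'd"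
      by (simp add: prod_ennreal indicator_cube_cart bern_eq_prod_Bernstein prod.distrib)
  qed
  also have "\<dots> = (\<Prod>i\<in>UNIV. \<integral>\<^sup>+t. ennreal (indicator {0..1} t * Bernstein n (h i) t) \<partial>lborel)"
    by (rule nn_integral_lborel_prod_cart) (unfold Bernstein_def, measurable)
  also have "\<dots> = ennreal ((1 / (real n + 1)) ^ CARD('d))"
    by (simp add: Bernstein_nn ennreal_power)
  finally have "(\<integral>\<^sup>+x. ennreal (bern n h x) \<partial>lebesgue_on cube) = ennreal ((1 / (real n + 1)) ^ CARD('d))" .
  moreover have "integrable (lebesgue_on cube) (bern n h :: real ^ 'd \<Rightarrow> real)"
    by (intro integrable_continuous_on_cube continuous_intros)
  moreover have "0 \<le> (LINT x|lebesgue_on cube. bern n h x)"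
    by (intro integral_nonneg_AE AE_I2) (simp add: bern_nonneg)
  ultimately show ?thesis
    by (subst (asm) nn_integral_eq_integral) (auto intro!: AE_I2 simp: bern_nonneg)
qed

section \<open>The boxes averaged by \<open>C\<^sub>n\<close>\<close>

definition subcube_map :: "real \<Rightarrow> nat \<Rightarrow> ('d::finite \<Rightarrow> nat) \<Rightarrow> real ^ 'd \<Rightarrow> real ^ 'd" where
  "subcube_map a n h u = (\<chi> i. (real (h i) + a * u $ i) / (real n + a))"

definition subcube :: "real \<Rightarrow> nat \<Rightarrow> ('d::finite \<Rightarrow> nat) \<Rightarrow> (real ^ 'd) set" where
  "subcube a n h = cbox (\<chi> i. real (h i) / (real n + a)) (\<chi> i. (real (h i) + a) / (real n + a))"

lemma subcube_in_sets_lebesgue [measurable]: "subcube a n h \<in> sets lebesgue"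
  by (simp add: subcube_def)

lemma subcube_map_eq_affine:
  "subcube_map a n h u = (\<chi> i. real (h i) / (real n + a)) + (a / (real n + a)) *\<^sub>R u"
  by (simp add: vec_eq_iff subcube_map_def add_divide_distrib)

lemma continuous_on_subcube_map [continuous_intros]: "continuous_on S (subcube_map a n h)"
  unfolding subcube_map_eq_affine by (intro continuous_intros)

lemma Cop_eq_subcube_map:
  "Cop a n f x = (\<Sum>h\<in>multi_idx n. bern n h x * (LINT u|lebesgue_on cube. f (subcube_map a n h u)))"
  by (simp add: Cop_def subcube_map_def)

lemma continuous_on_Cop [continuous_intros]: "continuous_on S (Cop a n f)"
  unfolding Cop_def by (intro continuous_intros)

lemma subcube_map_in_cube:
  assumes "a > 0" "h \<in> multi_idx n" "u \<in> cube"
  shows "subcube_map a n h u \<in> cube"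
  unfolding mem_cube_iff
proof
  fix i
  have "real (h i) \<le> real n" "0 \<le> u $ i" "u $ i \<le> 1"
    using assms by (auto simp: multi_idx_def mem_cube_iff)
  moreover from this have "a * u $ i \<le> a"
    using assms(1) by (simp add: mult_left_le)
  ultimately have "real (h i) + a * u $ i \<le> real n + a"
    by linarith
  with \<open>0 \<le> u $ i\<close> show "0 \<le> subcube_map a n h u $ i \<and> subcube_map a n h u $ i \<le> 1"
    using assms(1) by (simp add: subcube_map_def divide_le_eq_1)
qed

lemma subcube_map_in_subcube_iff:
  assumes "a > 0"
  shows "subcube_map a n h u \<in> subcube a n h \<longleftrightarrow> u \<in> cube"
  using assms
  by (simp add: subcube_def subcube_map_def mem_box_cart mem_cube_iff divide_le_cancel
      zero_le_mult_iff mult_le_cancel_left1 add_pos_pos)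

text \<open>Each point lies in at most \<open>a + 1\<close> of the intervals \<open>[k/(n+a), (k+a)/(n+a)]\<close>, \<open>k \<le> n\<close>.\<close>

lemma card_nat_set_in_interval_le:
  fixes K :: "nat set" and s a :: real
  assumes K: "finite K" and a: "a \<ge> 0" and w: "\<And>k. k \<in> K \<Longrightarrow> s - a \<le> real k \<and> real k \<le> s"
  shows "real (card K) \<le> a + 1"
proof (cases "K = {}")
  case False
  have "card K \<le> card {Min K..Max K}"
    using K by (intro card_mono) auto
  then have "real (card K) \<le> real (Max K) + 1 - real (Min K)"
    using Min_le[OF K Max_in[OF K False]] by simp
  moreover have "real (Max K) \<le> s" "s - a \<le> real (Min K)"
    using w[OF Max_in[OF K False]] w[OF Min_in[OF K False]] by auto
  ultimately show ?thesis by linarith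
qed (use a in simp)

lemma sum_indicator_subcube_le:
  fixes y :: "real ^ 'd::finite"
  assumes a: "a > 0"
  shows "(\<Sum>h\<in>multi_idx n. indicator (subcube a n h) y) \<le> (a + 1) ^ CARD('d)"
proof -
  define J where "J k = {real k / (real n + a) .. (real k + a) / (real n + a)}" for k
  have "(\<Sum>h\<in>multi_idx n. indicator (subcube a n h) y) = (\<Prod>i\<in>UNIV. \<Sum>k\<le>n. indicator (J k) (y $ i) :: real)"
    unfolding subcube_def indicator_cbox_cart J_def
    using sum_multi_idx_prod[of "\<lambda>i k. indicator (J k) (y $ i) :: real"] by (simp add: J_def)
  also have "\<dots> \<le> (\<Prod>i\<in>(UNIV::'d set). a + 1)"
  proof (rule prod_mono, rule conjI)
    fix i :: 'd
    have "(\<Sum>k\<le>n. indicator (J k) (y $ i) :: real) = real (card {k\<in>{..n}. y $ i \<in> J k})"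
      by (simp add: indicator_def sum.If_cases Int_def conj_commute)
    also have "\<dots> \<le> a + 1"
    proof (rule card_nat_set_in_interval_le[where s="(real n + a) * y $ i"])
      fix k assume "k \<in> {k\<in>{..n}. y $ i \<in> J k}"
      then show "(real n + a) * y $ i - a \<le> real k \<and> real k \<le> (real n + a) * y $ i"
        using a by (auto simp: J_def divide_le_eq le_divide_eq mult.commute)
    qed (use a in auto)
    finally show "(\<Sum>k\<le>n. indicator (J k) (y $ i) :: real) \<le> a + 1" .
  qed (simp add: sum_nonneg)
  finally show ?thesis by simp
qed

lemma Cop_diff:
  assumes "\<And>h. h \<in> multi_idx n \<Longrightarrow> integrable (lebesgue_on cube) (\<lambda>u. f (subcube_map a n h u))"
    and "\<And>h. h \<in> multi_idx n \<Longrightarrow> integrable (lebesgue_on cube) (\<lambda>u. g (subcube_map a n h u))"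
  shows "Cop a n (\<lambda>y. f y - g y) x = Cop a n f x - Cop a n g x"
  using assms by (simp add: Cop_eq_subcube_map right_diff_distrib sum_subtractf)

lemma integrable_comp_subcube_map_continuous:
  assumes "a > 0" "h \<in> multi_idx n" "continuous_on cube g"
  shows "integrable (lebesgue_on cube) (\<lambda>u. g (subcube_map a n h u) :: real)"
  using subcube_map_in_cube[OF assms(1,2)]
  by (intro integrable_continuous_on_cube continuous_on_compose2[OF assms(3) continuous_on_subcube_map]) auto

lemma Cop_const: "Cop a n (\<lambda>_. c) (x :: real ^ 'd::finite) = c"
  by (simp add: Cop_eq_subcube_map flip: sum_distrib_right)

lemma Cop_minus_eq:
  assumes "\<And>h. h \<in> multi_idx n \<Longrightarrow> integrable (lebesgue_on cube) (\<lambda>u. f (subcube_map a n h u))"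
  shows "Cop a n f x - c = (\<Sum>h\<in>multi_idx n. bern n h x * (LINT u|lebesgue_on cube. f (subcube_map a n h u) - c))"
proof -
  have "Cop a n (\<lambda>y. f y - c) x = Cop a n f x - Cop a n (\<lambda>_. c) x"
    by (rule Cop_diff) (auto intro: assms integrable_continuous_on_cube)
  moreover have "Cop a n (\<lambda>y. f y - c) x = (\<Sum>h\<in>multi_idx n. bern n h x * (LINT u|lebesgue_on cube. f (subcube_map a n h u) - c))"
    by (simp only: Cop_eq_subcube_map)
  ultimately show ?thesis
    using Cop_const[of a n c x] by linarith
qed

section \<open>Uniform \<open>L\<^sup>p\<close> bound for \<open>C\<^sub>n\<close>\<close>

lemma nn_integral_lebesgue_affine:
  fixes f :: "real ^ 'd::finite \<Rightarrow> ennreal"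
  assumes f[measurable]: "f \<in> borel_measurable lebesgue" and c: "c \<noteq> 0"
  shows "(\<integral>\<^sup>+x. f x \<partial>lebesgue) = ennreal (\<bar>c\<bar> ^ CARD('d)) * (\<integral>\<^sup>+x. f (t + c *\<^sub>R x) \<partial>lebesgue)"
proof -
  have affine_eq: "(\<lambda>x. t + (\<Sum>j\<in>Basis. (c * (x \<bullet> j)) *\<^sub>R j)) = (\<lambda>x::real ^ 'd. t + c *\<^sub>R x)"
    by (simp flip: scaleR_scaleR scaleR_sum_right add: euclidean_representation)
  have lebesgue_eq: "lebesgue = density (distr lebesgue lebesgue (\<lambda>x::real ^ 'd. t + c *\<^sub>R x)) (\<lambda>_. ennreal (\<bar>c\<bar> ^ CARD('d)))"
    using lebesgue_affine_euclidean[of "\<lambda>_. c" t] c unfolding affine_eq by (simp add: prod_constant)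
  have [measurable]: "(\<lambda>x::real ^ 'd. t + c *\<^sub>R x) \<in> lebesgue \<rightarrow>\<^sub>M lebesgue"
    using lebesgue_affine_measurable[of "\<lambda>_. c" t] c unfolding affine_eq by simp
  show ?thesis
    by (subst lebesgue_eq, subst nn_integral_density)
      (auto simp: nn_integral_cmult nn_integral_distr measurable_distr_eq1)
qed

lemma nn_integral_subcube_map:
  fixes F :: "real ^ 'd::finite \<Rightarrow> ennreal" and h :: "'d \<Rightarrow> nat"
  assumes a: "a > 0" and h: "h \<in> multi_idx n" and F: "F \<in> borel_measurable (lebesgue_on cube)"
  shows "ennreal ((a / (real n + a)) ^ CARD('d)) * (\<integral>\<^sup>+u. F (subcube_map a n h u) \<partial>lebesgue_on cube)
    = (\<integral>\<^sup>+y. indicator (subcube a n h) y * (F y * indicator cube y) \<partial>lebesgue)"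
proof -
  define G where "G y = indicator (subcube a n h) y * (F y * indicator cube y)" for y
  have [measurable]: "G \<in> borel_measurable lebesgue"
    using F unfolding G_def by (subst (asm) borel_measurable_restrict_space_iff_ennreal) auto
  have "(\<integral>\<^sup>+u. F (subcube_map a n h u) \<partial>lebesgue_on cube) = (\<integral>\<^sup>+u. F (subcube_map a n h u) * indicator cube u \<partial>lebesgue)"
    by (simp add: nn_integral_restrict_space)
  also have "\<dots> = (\<integral>\<^sup>+u. G ((\<chi> i. real (h i) / (real n + a)) + (a / (real n + a)) *\<^sub>R u) \<partial>lebesgue)"
    using subcube_map_in_cube[OF a h] subcube_map_in_subcube_iff[OF a]
    by (intro nn_integral_cong) (auto simp: G_def subcube_map_eq_affine split: split_indicator)
  finally show ?thesis
    using nn_integral_lebesgue_affine[of G "a / (real n + a)"] a by (simp add: G_def)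
qed

lemma sum_nn_integral_subcube_map_le:
  fixes F :: "real ^ 'd::finite \<Rightarrow> ennreal"
  assumes a: "a > 0" and F: "F \<in> borel_measurable (lebesgue_on cube)"
  shows "ennreal ((a / (real n + a)) ^ CARD('d)) * (\<Sum>h\<in>multi_idx n. \<integral>\<^sup>+u. F (subcube_map a n h u) \<partial>lebesgue_on cube)
    \<le> ennreal ((a + 1) ^ CARD('d)) * (\<integral>\<^sup>+y. F y \<partial>lebesgue_on cube)"
proof -
  have [measurable]: "(\<lambda>y. F y * indicator cube y) \<in> borel_measurable lebesgue"
    using F by (subst (asm) borel_measurable_restrict_space_iff_ennreal) auto
  have overlap: "(\<Sum>h\<in>multi_idx n. indicator (subcube a n h) y) \<le> ennreal ((a + 1) ^ CARD('d))" for y :: "real ^ 'd"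
  proof -
    have "(\<Sum>h\<in>multi_idx n. indicator (subcube a n h) y) = ennreal (\<Sum>h\<in>multi_idx n. indicator (subcube a n h) y)"
      unfolding ennreal_indicator[symmetric] by (rule sum_ennreal) simp
    then show ?thesis
      using sum_indicator_subcube_le[OF a, of n y] by (simp add: ennreal_leI)
  qed
  have "ennreal ((a / (real n + a)) ^ CARD('d)) * (\<Sum>h\<in>multi_idx n. \<integral>\<^sup>+u. F (subcube_map a n h u) \<partial>lebesgue_on cube)
      = (\<Sum>h\<in>multi_idx n. \<integral>\<^sup>+y. indicator (subcube a n h) y * (F y * indicator cube y) \<partial>lebesgue)"
    by (simp add: sum_distrib_left nn_integral_subcube_map[OF a _ F])
  also have "\<dots> = (\<integral>\<^sup>+y. (\<Sum>h\<in>multi_idx n. indicator (subcube a n h) y) * (F y * indicator cube y) \<partial>lebesgue)"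
    unfolding sum_distrib_right by (rule nn_integral_sum[symmetric]) simp
  also have "\<dots> \<le> (\<integral>\<^sup>+y. ennreal ((a + 1) ^ CARD('d)) * (F y * indicator cube y) \<partial>lebesgue)"
    by (intro nn_integral_mono mult_right_mono overlap) simp
  also have "\<dots> = ennreal ((a + 1) ^ CARD('d)) * (\<integral>\<^sup>+y. F y \<partial>lebesgue_on cube)"
    by (simp add: nn_integral_cmult nn_integral_restrict_space)
  finally show ?thesis .
qed

lemma measurable_comp_subcube_map:
  fixes \<phi> :: "real ^ 'd::finite \<Rightarrow> real"
  assumes a: "a > 0" and h: "h \<in> multi_idx n" and \<phi>: "\<phi> \<in> borel_measurable (lebesgue_on cube)"
  shows "(\<lambda>u. \<phi> (subcube_map a n h u)) \<in> borel_measurable (lebesgue_on cube)"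
proof -
  define \<phi>0 where "\<phi>0 y = indicator cube y *\<^sub>R \<phi> y" for y
  have "\<phi>0 \<in> borel_measurable lebesgue"
    using \<phi> unfolding \<phi>0_def by (subst (asm) borel_measurable_restrict_space_iff) auto
  then have "(\<lambda>u. \<phi>0 ((\<chi> i. real (h i) / (real n + a)) + (a / (real n + a)) *\<^sub>R u)) \<in> borel_measurable lebesgue"
    by (rule borel_measurable_affine) (use a in simp)
  then have "(\<lambda>u. \<phi>0 (subcube_map a n h u)) \<in> borel_measurable (lebesgue_on cube)"
    unfolding subcube_map_eq_affine by (rule measurable_restrict_space1)
  then show ?thesis
    by (rule measurable_cong[THEN iffD1, rotated]) (simp add: \<phi>0_def subcube_map_in_cube[OF a h])
qed

lemma
  fixes \<phi> :: "real ^ 'd::finite \<Rightarrow> real"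
  assumes a: "a > 0" and p: "p \<ge> 1" and h: "h \<in> multi_idx n"
    and \<phi>: "\<phi> \<in> borel_measurable (lebesgue_on cube)"
    and \<phi>_Lp: "integrable (lebesgue_on cube) (\<lambda>x. \<bar>\<phi> x\<bar> powr p)"
  shows integrable_abs_powr_comp_subcube_map:
      "integrable (lebesgue_on cube) (\<lambda>u. \<bar>\<phi> (subcube_map a n h u)\<bar> powr p)"
    and integrable_comp_subcube_map:
      "integrable (lebesgue_on cube) (\<lambda>u. \<phi> (subcube_map a n h u))"
proof -
  define c where "c = ennreal ((a / (real n + a)) ^ CARD('d))"
  have [measurable]: "(\<lambda>u. \<phi> (subcube_map a n h u)) \<in> borel_measurable (lebesgue_on cube)"
    by (rule measurable_comp_subcube_map[OF a h \<phi>])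
  have "c * (\<integral>\<^sup>+u. ennreal (\<bar>\<phi> (subcube_map a n h u)\<bar> powr p) \<partial>lebesgue_on cube)
      \<le> c * (\<Sum>h\<in>multi_idx n. \<integral>\<^sup>+u. ennreal (\<bar>\<phi> (subcube_map a n h u)\<bar> powr p) \<partial>lebesgue_on cube)"
    using h by (intro mult_left_mono member_le_sum) auto
  also have "\<dots> \<le> ennreal ((a + 1) ^ CARD('d)) * (\<integral>\<^sup>+y. ennreal (\<bar>\<phi> y\<bar> powr p) \<partial>lebesgue_on cube)"
    unfolding c_def using \<phi> by (intro sum_nn_integral_subcube_map_le[OF a]) measurable
  also have "\<dots> < \<infinity>"
    using \<phi>_Lp by (simp add: nn_integral_eq_integral ennreal_mult_less_top)
  finally have "(\<integral>\<^sup>+u. ennreal (norm (\<bar>\<phi> (subcube_map a n h u)\<bar> powr p)) \<partial>lebesgue_on cube) < \<infinity>"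
    using a by (auto simp: c_def ennreal_mult_less_top)
  then show int_powr: "integrable (lebesgue_on cube) (\<lambda>u. \<bar>\<phi> (subcube_map a n h u)\<bar> powr p)"
    unfolding integrable_iff_bounded by (intro conjI) measurable
  show "integrable (lebesgue_on cube) (\<lambda>u. \<phi> (subcube_map a n h u))"
    by (rule integrable_if_integrable_abs_powr[OF prob_space.axioms(1)[OF prob_space_cube] p _ int_powr])
      measurable
qed

lemma sum_integral_comp_subcube_map_le:
  fixes \<phi> :: "real ^ 'd::finite \<Rightarrow> real"
  assumes a: "a > 0" and p: "p \<ge> 1"
    and \<phi>: "\<phi> \<in> borel_measurable (lebesgue_on cube)"
    and \<phi>_Lp: "integrable (lebesgue_on cube) (\<lambda>x. \<bar>\<phi> x\<bar> powr p)"
  shows "(a / (real n + a)) ^ CARD('d) * (\<Sum>h\<in>multi_idx n. LINT u|lebesgue_on cube. \<bar>\<phi> (subcube_map a n h u)\<bar> powr p)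
    \<le> (a + 1) ^ CARD('d) * (LINT y|lebesgue_on cube. \<bar>\<phi> y\<bar> powr p)"
proof -
  note [measurable] = \<phi>
  have nn_eq: "(\<integral>\<^sup>+u. ennreal (\<bar>\<phi> (subcube_map a n h u)\<bar> powr p) \<partial>lebesgue_on cube)
      = ennreal (LINT u|lebesgue_on cube. \<bar>\<phi> (subcube_map a n h u)\<bar> powr p)" if "h \<in> multi_idx n" for h
    using integrable_abs_powr_comp_subcube_map[OF a p that \<phi> \<phi>_Lp] by (simp add: nn_integral_eq_integral)
  have "ennreal ((a / (real n + a)) ^ CARD('d) * (\<Sum>h\<in>multi_idx n. LINT u|lebesgue_on cube. \<bar>\<phi> (subcube_map a n h u)\<bar> powr p))
      = ennreal ((a / (real n + a)) ^ CARD('d)) * (\<Sum>h\<in>multi_idx n. \<integral>\<^sup>+u. ennreal (\<bar>\<phi> (subcube_map a n h u)\<bar> powr p) \<partial>lebesgue_on cube)"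
    using a by (simp add: nn_eq ennreal_mult sum_ennreal sum_nonneg integral_nonneg_AE)
  also have "\<dots> \<le> ennreal ((a + 1) ^ CARD('d)) * (\<integral>\<^sup>+y. ennreal (\<bar>\<phi> y\<bar> powr p) \<partial>lebesgue_on cube)"
    by (intro sum_nn_integral_subcube_map_le[OF a]) measurable
  also have "\<dots> = ennreal ((a + 1) ^ CARD('d) * (LINT y|lebesgue_on cube. \<bar>\<phi> y\<bar> powr p))"
    using a \<phi>_Lp by (simp add: nn_integral_eq_integral ennreal_mult)
  finally show ?thesis
    using a by (simp add: ennreal_le_iff integral_nonneg_AE)
qed

lemma abs_Cop_powr_le:
  fixes \<phi> :: "real ^ 'd::finite \<Rightarrow> real"
  assumes a: "a > 0" and p: "p \<ge> 1" and x: "x \<in> cube"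
    and \<phi>: "\<phi> \<in> borel_measurable (lebesgue_on cube)"
    and \<phi>_Lp: "integrable (lebesgue_on cube) (\<lambda>x. \<bar>\<phi> x\<bar> powr p)"
  shows "\<bar>Cop a n \<phi> x\<bar> powr p
    \<le> (\<Sum>h\<in>multi_idx n. bern n h x * (LINT u|lebesgue_on cube. \<bar>\<phi> (subcube_map a n h u)\<bar> powr p))"
proof -
  \<comment> \<open>Jensen's inequality twice: for the Bernstein weights, which sum to 1, and for each average\<close>
  define I where "I h = (LINT u|lebesgue_on cube. \<phi> (subcube_map a n h u))" for h
  have "\<bar>Cop a n \<phi> x\<bar> powr p = \<bar>\<Sum>h\<in>multi_idx n. bern n h x *\<^sub>R I h\<bar> powr p"
    by (simp add: Cop_eq_subcube_map I_def)
  also have "\<dots> \<le> (\<Sum>h\<in>multi_idx n. bern n h x * \<bar>I h\<bar> powr p)"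
    by (rule convex_on_sum[OF finite_multi_idx multi_idx_not_empty convex_on_abs_powr[OF p]])
      (auto simp: bern_nonneg[OF x])
  also have "\<dots> \<le> (\<Sum>h\<in>multi_idx n. bern n h x * (LINT u|lebesgue_on cube. \<bar>\<phi> (subcube_map a n h u)\<bar> powr p))"
    unfolding I_def
    by (intro sum_mono mult_left_mono bern_nonneg[OF x] abs_integral_powr_le[OF prob_space_cube p]
        integrable_comp_subcube_map[OF a p _ \<phi> \<phi>_Lp] integrable_abs_powr_comp_subcube_map[OF a p _ \<phi> \<phi>_Lp])
  finally show ?thesis .
qed

lemma Cop_norm_factor_le:
  assumes "a > 0"
  shows "(a + 1) * (real n + a) / ((real n + 1) * a) \<le> (a + 1)\<^sup>2 / a"
proof -
  have "(real n + a) / (real n + 1) \<le> a + 1"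
    using assms by (simp add: divide_le_eq algebra_simps)
  then have "(a + 1) / a * ((real n + a) / (real n + 1)) \<le> (a + 1) / a * (a + 1)"
    using assms by (intro mult_left_mono) auto
  then show ?thesis
    by (simp add: power2_eq_square mult.commute)
qed

lemma integral_abs_Cop_powr_le:
  fixes \<phi> :: "real ^ 'd::finite \<Rightarrow> real"
  assumes a: "a > 0" and p: "p \<ge> 1"
    and \<phi>: "\<phi> \<in> borel_measurable (lebesgue_on cube)"
    and \<phi>_Lp: "integrable (lebesgue_on cube) (\<lambda>x. \<bar>\<phi> x\<bar> powr p)"
  shows "(LINT x|lebesgue_on cube. \<bar>Cop a n \<phi> x\<bar> powr p) \<le> ((a + 1)\<^sup>2 / a) ^ CARD('d) * (LINT x|lebesgue_on cube. \<bar>\<phi> x\<bar> powr p)"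
proof -
  define R where "R h = (LINT u|lebesgue_on cube. \<bar>\<phi> (subcube_map a n h u)\<bar> powr p)" for h
  define c where "c = (a / (real n + a)) ^ CARD('d)"
  have c: "c > 0"
    using a by (simp add: c_def)
  have "(LINT x|lebesgue_on cube. \<bar>Cop a n \<phi> x\<bar> powr p) \<le> (LINT x|lebesgue_on cube. (\<Sum>h\<in>multi_idx n. bern n h x * R h))"
    using abs_Cop_powr_le[OF a p _ \<phi> \<phi>_Lp] p unfolding R_def
    by (intro integral_mono integrable_continuous_on_cube continuous_intros continuous_on_powr') auto
  also have "\<dots> = (1 / (real n + 1)) ^ CARD('d) * (\<Sum>h\<in>multi_idx n. R h)"
    by (simp add: integrable_continuous_on_cube continuous_intros integral_bern_cube sum_distrib_left)
  also have "\<dots> \<le> (1 / (real n + 1)) ^ CARD('d) * ((a + 1) ^ CARD('d) / c * (LINT x|lebesgue_on cube. \<bar>\<phi> x\<bar> powr p))"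
  proof (intro mult_left_mono)
    have "c * (\<Sum>h\<in>multi_idx n. R h) \<le> (a + 1) ^ CARD('d) * (LINT x|lebesgue_on cube. \<bar>\<phi> x\<bar> powr p)"
      using sum_integral_comp_subcube_map_le[OF a p \<phi> \<phi>_Lp, of n] by (simp add: R_def c_def)
    then show "(\<Sum>h\<in>multi_idx n. R h) \<le> (a + 1) ^ CARD('d) / c * (LINT x|lebesgue_on cube. \<bar>\<phi> x\<bar> powr p)"
      using c by (simp add: field_simps)
  qed simp
  also have "\<dots> = ((a + 1) * (real n + a) / ((real n + 1) * a)) ^ CARD('d) * (LINT x|lebesgue_on cube. \<bar>\<phi> x\<bar> powr p)"
    using a by (simp add: c_def power_divide power_mult_distrib)
  also have "\<dots> \<le> ((a + 1)\<^sup>2 / a) ^ CARD('d) * (LINT x|lebesgue_on cube. \<bar>\<phi> x\<bar> powr p)"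
    using Cop_norm_factor_le[OF a] a by (intro mult_right_mono power_mono integral_nonneg_AE) auto
  finally show ?thesis .
qed

section \<open>Uniform convergence on continuous functions\<close>

lemma continuous_on_compact_quadratic_modulus:
  fixes g :: "'a::real_normed_vector \<Rightarrow> real"
  assumes S: "compact S" and g: "continuous_on S g" and e: "e > 0"
  obtains C where "C \<ge> 0" "\<And>x y. x \<in> S \<Longrightarrow> y \<in> S \<Longrightarrow> \<bar>g y - g x\<bar> \<le> e + C * (norm (y - x))\<^sup>2"
proof -
  obtain B where B: "B > 0" "\<And>x. x \<in> S \<Longrightarrow> \<bar>g x\<bar> \<le> B"
    using compact_imp_bounded[OF compact_continuous_image[OF g S]] by (auto simp: bounded_pos)
  obtain d where d: "d > 0" "\<And>x y. x \<in> S \<Longrightarrow> y \<in> S \<Longrightarrow> dist y x < d \<Longrightarrow> dist (g y) (g x) < e"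
    using compact_uniformly_continuous[OF g S] e unfolding uniformly_continuous_on_def by metis
  have "\<bar>g y - g x\<bar> \<le> e + 2 * B / d\<^sup>2 * (norm (y - x))\<^sup>2" if xy: "x \<in> S" "y \<in> S" for x y
  proof (cases "dist y x < d")
    case True
    then show ?thesis
      using d(2)[OF xy] B by (simp add: dist_real_def add_increasing2)
  next
    case False
    then have "d\<^sup>2 \<le> (norm (y - x))\<^sup>2"
      using d by (intro power_mono) (auto simp: dist_norm)
    then have "2 * B \<le> 2 * B / d\<^sup>2 * (norm (y - x))\<^sup>2"
      using B d by (simp add: field_simps)
    moreover have "\<bar>g y - g x\<bar> \<le> 2 * B"
      using B(2)[OF xy(1)] B(2)[OF xy(2)] by linarith
    ultimately show ?thesis
      using e by linarith
  qed
  then show ?thesis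
    using B d by (intro that[of "2 * B / d\<^sup>2"]) auto
qed

lemma norm_subcube_map_diff_le:
  assumes a: "a > 0" and x: "x \<in> cube" and u: "u \<in> cube"
  shows "(norm (subcube_map a n h u - x))\<^sup>2 \<le> 2 / (real n + a)\<^sup>2 * (\<Sum>i\<in>UNIV. (real (h i) - real n * x $ i)\<^sup>2 + a\<^sup>2)"
proof -
  have "((subcube_map a n h u - x) $ i)\<^sup>2 \<le> 2 * ((real (h i) - real n * x $ i)\<^sup>2 + a\<^sup>2) / (real n + a)\<^sup>2" for i
  proof -
    define s where "s = real (h i) - real n * x $ i"
    define r where "r = a * (u $ i - x $ i)"
    have "0 \<le> u $ i" "u $ i \<le> 1" "0 \<le> x $ i" "x $ i \<le> 1"
      using x u by (auto simp: mem_cube_iff)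
    then have "\<bar>u $ i - x $ i\<bar> \<le> 1"
      by linarith
    then have "\<bar>r\<bar> \<le> a"
      using a by (simp add: r_def abs_mult mult_left_le)
    then have "r\<^sup>2 \<le> a\<^sup>2"
      using a abs_le_square_iff[of r a] by simp
    moreover have "(s + r)\<^sup>2 \<le> 2 * s\<^sup>2 + 2 * r\<^sup>2"
      using sum_squares_ge_zero[of "s - r" 0] by (simp add: power2_eq_square algebra_simps)
    moreover have "(subcube_map a n h u - x) $ i = (s + r) / (real n + a)"
      using a by (simp add: subcube_map_def s_def r_def field_simps)
    ultimately show ?thesis
      using a by (simp add: power_divide s_def divide_right_mono)
  qed
  then have "(norm (subcube_map a n h u - x))\<^sup>2 \<le> (\<Sum>i\<in>UNIV. 2 * ((real (h i) - real n * x $ i)\<^sup>2 + a\<^sup>2) / (real n + a)\<^sup>2)"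
    unfolding power2_norm_eq_inner inner_vec_def by (intro sum_mono) (simp add: power2_eq_square)
  then show ?thesis
    by (simp add: sum_distrib_left)
qed

lemma sum_bern_second_moment_le:
  fixes x :: "real ^ 'd::finite"
  assumes x: "x \<in> cube"
  shows "(\<Sum>h\<in>multi_idx n. bern n h x * (\<Sum>i\<in>UNIV. (real (h i) - real n * x $ i)\<^sup>2 + a\<^sup>2))
    \<le> real CARD('d) * (real n + a\<^sup>2)"
proof -
  have "(\<Sum>h\<in>multi_idx n. bern n h x * (\<Sum>i\<in>UNIV. (real (h i) - real n * x $ i)\<^sup>2 + a\<^sup>2))
      = (\<Sum>i\<in>UNIV. \<Sum>h\<in>multi_idx n. bern n h x * ((real (h i) - real n * x $ i)\<^sup>2 + a\<^sup>2))"
    unfolding sum_distrib_left by (rule sum.swap)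
  also have "\<dots> = (\<Sum>i\<in>UNIV. real n * x $ i * (1 - x $ i) + a\<^sup>2)"
    by (simp add: distrib_left sum.distrib sum_bern_variance flip: sum_distrib_right)
  also have "\<dots> \<le> (\<Sum>i\<in>(UNIV :: 'd set). real n + a\<^sup>2)"
  proof (intro sum_mono add_right_mono)
    fix i
    have "x $ i * (1 - x $ i) \<le> 1"
      using x by (intro mult_le_one) (auto simp: mem_cube_iff)
    then show "real n * x $ i * (1 - x $ i) \<le> real n"
      using mult_left_mono[of _ 1 "real n"] by (simp add: mult.assoc)
  qed
  finally show ?thesis
    by simp
qed

lemma abs_integral_comp_subcube_map_diff_le:
  fixes g :: "real ^ 'd::finite \<Rightarrow> real"
  assumes a: "a > 0" and g: "continuous_on cube g" and C: "C \<ge> 0"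
    and modulus: "\<And>x y. x \<in> cube \<Longrightarrow> y \<in> cube \<Longrightarrow> \<bar>g y - g x\<bar> \<le> e + C * (norm (y - x))\<^sup>2"
    and x: "x \<in> cube" and h: "h \<in> multi_idx n"
  shows "\<bar>LINT u|lebesgue_on cube. g (subcube_map a n h u) - g x\<bar>
    \<le> e + 2 * C / (real n + a)\<^sup>2 * (\<Sum>i\<in>UNIV. (real (h i) - real n * x $ i)\<^sup>2 + a\<^sup>2)"
    (is "_ \<le> ?bound")
proof -
  have "\<bar>g (subcube_map a n h u) - g x\<bar> \<le> ?bound" if u: "u \<in> cube" for u
  proof -
    have "C * (norm (subcube_map a n h u - x))\<^sup>2 \<le> C * (2 / (real n + a)\<^sup>2 * (\<Sum>i\<in>UNIV. (real (h i) - real n * x $ i)\<^sup>2 + a\<^sup>2))"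
      using norm_subcube_map_diff_le[OF a x u, of n h] C by (rule mult_left_mono)
    also have "\<dots> = 2 * C / (real n + a)\<^sup>2 * (\<Sum>i\<in>UNIV. (real (h i) - real n * x $ i)\<^sup>2 + a\<^sup>2)"
      by simp
    finally show ?thesis
      using modulus[OF x subcube_map_in_cube[OF a h u]] by linarith
  qed
  then have "\<bar>LINT u|lebesgue_on cube. g (subcube_map a n h u) - g x\<bar> \<le> (LINT u|lebesgue_on (cube :: (real ^ 'd) set). ?bound)"
    by (intro integral_abs_bound_integral Bochner_Integration.integrable_diff
        integrable_comp_subcube_map_continuous[OF a h g] integrable_continuous_on_cube continuous_on_const) auto
  then show ?thesis
    by simp
qed

lemma abs_Cop_diff_le:
  fixes g :: "real ^ 'd::finite \<Rightarrow> real"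
  assumes a: "a > 0" and g: "continuous_on cube g" and C: "C \<ge> 0"
    and modulus: "\<And>x y. x \<in> cube \<Longrightarrow> y \<in> cube \<Longrightarrow> \<bar>g y - g x\<bar> \<le> e + C * (norm (y - x))\<^sup>2"
    and x: "x \<in> cube"
  shows "\<bar>Cop a n g x - g x\<bar> \<le> e + 2 * C * real CARD('d) * ((real n + a\<^sup>2) / (real n + a)\<^sup>2)"
proof -
  define M where "M h = (\<Sum>i\<in>UNIV. (real (h i) - real n * x $ i)\<^sup>2 + a\<^sup>2)" for h :: "'d \<Rightarrow> nat"
  define I where "I h = (LINT u|lebesgue_on cube. g (subcube_map a n h u) - g x)" for h :: "'d \<Rightarrow> nat"
  define B where "B = 2 * C / (real n + a)\<^sup>2"
  have "Cop a n g x - g x = (\<Sum>h\<in>multi_idx n. bern n h x * I h)"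
    unfolding I_def by (rule Cop_minus_eq) (rule integrable_comp_subcube_map_continuous[OF a _ g])
  then have "\<bar>Cop a n g x - g x\<bar> \<le> (\<Sum>h\<in>multi_idx n. bern n h x * \<bar>I h\<bar>)"
    using sum_abs[of "\<lambda>h. bern n h x * I h" "multi_idx n"] bern_nonneg[OF x] by (simp add: abs_mult)
  also have "\<dots> \<le> (\<Sum>h\<in>multi_idx n. bern n h x * (e + B * M h))"
    using abs_integral_comp_subcube_map_diff_le[OF a g C modulus x] bern_nonneg[OF x]
    unfolding I_def M_def B_def by (intro sum_mono mult_left_mono) auto
  also have "\<dots> = e + B * (\<Sum>h\<in>multi_idx n. bern n h x * M h)"
    by (simp add: distrib_left sum.distrib sum_distrib_left mult.left_commute flip: sum_distrib_right)
  also have "\<dots> \<le> e + B * (real CARD('d) * (real n + a\<^sup>2))"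
    using sum_bern_second_moment_le[OF x, of n a] C unfolding M_def B_def by (intro add_left_mono mult_left_mono) auto
  finally show ?thesis
    by (simp add: B_def)
qed

lemma second_moment_ratio_le:
  assumes "a \<ge> 0" "n > 0"
  shows "(real n + a\<^sup>2) / (real n + a)\<^sup>2 \<le> (1 + a\<^sup>2) / real n"
proof -
  have "a\<^sup>2 * real n \<le> a\<^sup>2 * (real n)\<^sup>2"
    using assms(2) by (intro mult_left_mono) (simp_all add: power2_eq_square)
  then have "real n * (real n + a\<^sup>2) \<le> (1 + a\<^sup>2) * (real n)\<^sup>2"
    by (simp add: power2_eq_square algebra_simps)
  also have "\<dots> \<le> (1 + a\<^sup>2) * (real n + a)\<^sup>2"
    using assms(1) by (intro mult_left_mono power_mono) auto
  finally show ?thesis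
    using assms by (simp add: divide_simps mult.commute)
qed

lemma uniform_limit_Cop:
  fixes g :: "real ^ 'd::finite \<Rightarrow> real"
  assumes a: "a > 0" and g: "continuous_on cube g"
  shows "uniform_limit cube (\<lambda>n. Cop a n g) g sequentially"
proof (rule uniform_limitI)
  fix e :: real assume e: "e > 0"
  obtain C where C: "C \<ge> 0" and modulus: "\<And>x y. x \<in> cube \<Longrightarrow> y \<in> cube \<Longrightarrow> \<bar>g y - g x\<bar> \<le> e / 2 + C * (norm (y - x))\<^sup>2"
    using continuous_on_compact_quadratic_modulus[OF _ g, of "e / 2"] e by (auto simp: cube_def)
  define K where "K = 2 * C * real CARD('d) * (1 + a\<^sup>2)"
  have error_le: "2 * C * real CARD('d) * ((real n + a\<^sup>2) / (real n + a)\<^sup>2) \<le> K / real n" if "n > 0" for n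
  proof -
    have "2 * C * real CARD('d) * ((real n + a\<^sup>2) / (real n + a)\<^sup>2) \<le> 2 * C * real CARD('d) * ((1 + a\<^sup>2) / real n)"
      using second_moment_ratio_le[of a n] a that C by (intro mult_left_mono) auto
    then show ?thesis
      by (simp add: K_def)
  qed
  have "eventually (\<lambda>n. K / real n < e / 2) sequentially"
    using e by (intro order_tendstoD(2)[OF lim_const_over_n]) simp
  then show "\<forall>\<^sub>F n in sequentially. \<forall>x\<in>cube. dist (Cop a n g x) (g x) < e"
    using eventually_gt_at_top[of 0]
  proof eventually_elim
    case (elim n)
    show ?case
    proof
      fix x :: "real ^ 'd" assume "x \<in> cube"
      then have "\<bar>Cop a n g x - g x\<bar> \<le> e / 2 + 2 * C * real CARD('d) * ((real n + a\<^sup>2) / (real n + a)\<^sup>2)"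
        by (intro abs_Cop_diff_le[OF a g C] modulus)
      then show "dist (Cop a n g x) (g x) < e"
        unfolding dist_real_def using error_le[OF elim(2)] elim(1) by linarith
    qed
  qed
qed

section \<open>Density of continuous functions in \<open>L\<^sup>p\<close>\<close>

lemma Lp_truncation_tendsto:
  fixes f :: "'a \<Rightarrow> real"
  assumes p: "p \<ge> 1" and [measurable]: "f \<in> borel_measurable M"
    and f_Lp: "integrable M (\<lambda>x. \<bar>f x\<bar> powr p)"
  shows "(\<lambda>m::nat. LINT x|M. \<bar>f x - max (- real m) (min (real m) (f x))\<bar> powr p) \<longlonglongrightarrow> 0"
proof -
  have "(\<lambda>m::nat. LINT x|M. \<bar>f x - max (- real m) (min (real m) (f x))\<bar> powr p) \<longlonglongrightarrow> (LINT x|M. 0)"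
  proof (rule integral_dominated_convergence[where w="\<lambda>x. \<bar>f x\<bar> powr p"])
    show "AE x in M. (\<lambda>m. \<bar>f x - max (- real m) (min (real m) (f x))\<bar> powr p) \<longlonglongrightarrow> 0"
    proof (rule AE_I2)
      fix x
      obtain k :: nat where "\<bar>f x\<bar> \<le> real k"
        using real_arch_simple by blast
      then have "\<forall>\<^sub>F m in sequentially. \<bar>f x - max (- real m) (min (real m) (f x))\<bar> powr p = 0"
        unfolding eventually_sequentially by (intro exI[of _ k]) auto
      then show "(\<lambda>m. \<bar>f x - max (- real m) (min (real m) (f x))\<bar> powr p) \<longlonglongrightarrow> 0"
        by (rule tendsto_eventually)
    qed
    show "AE x in M. norm (\<bar>f x - max (- real m) (min (real m) (f x))\<bar> powr p) \<le> \<bar>f x\<bar> powr p" for m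
      using p by (intro AE_I2) (auto intro!: powr_mono2)
  qed (use f_Lp in auto)
  then show ?thesis
    by simp
qed

lemma borel_measurable_lebesgue_on_AE_continuous_limit:
  fixes f :: "'a::euclidean_space \<Rightarrow> 'b::euclidean_space"
  assumes S: "S \<in> sets lebesgue" and f: "f \<in> borel_measurable (lebesgue_on S)"
  obtains g where "\<And>j. continuous_on UNIV (g j)" "AE x in lebesgue_on S. (\<lambda>j. g j x) \<longlonglongrightarrow> f x"
proof -
  have "f measurable_on S"
    using S f by (simp add: measurable_on_iff_borel_measurable)
  then obtain N g where N: "negligible N" and g: "\<And>j. continuous_on UNIV (g j)"
    and g_lim: "\<And>x. x \<notin> N \<Longrightarrow> (\<lambda>j. g j x) \<longlonglongrightarrow> (if x \<in> S then f x else 0)"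
    unfolding measurable_on_def by blast
  have "AE x in lebesgue. x \<notin> N"
    using N by (intro AE_not_in) (simp add: negligible_iff_null_sets)
  then have "AE x in lebesgue_on S. x \<notin> N"
    using S by (simp add: AE_restrict_space_iff) (erule AE_mp, simp)
  then have "AE x in lebesgue_on S. (\<lambda>j. g j x) \<longlonglongrightarrow> f x"
  proof (rule AE_mp, intro AE_I2 impI)
    fix x assume "x \<in> space (lebesgue_on S)" "x \<notin> N"
    then show "(\<lambda>j. g j x) \<longlonglongrightarrow> f x"
      using g_lim[of x] by simp
  qed
  with g show ?thesis
    using that by blast
qed

lemma Lp_continuous_dense:
  fixes f :: "'a::euclidean_space \<Rightarrow> real"
  assumes S: "S \<in> lmeasurable" and p: "p \<ge> 1" and f: "f \<in> borel_measurable (lebesgue_on S)"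
    and f_Lp: "integrable (lebesgue_on S) (\<lambda>x. \<bar>f x\<bar> powr p)" and e: "e > 0"
  obtains g where "continuous_on UNIV g" "integrable (lebesgue_on S) (\<lambda>x. \<bar>f x - g x\<bar> powr p)"
    "(LINT x|lebesgue_on S. \<bar>f x - g x\<bar> powr p) < e"
proof -
  note [measurable] = f
  interpret finite_measure "lebesgue_on S"
    using S by (rule finite_measure_lebesgue_on)
  define T where "T m t = max (- m) (min m t)" for m t :: real
  obtain m :: nat where m: "(LINT x|lebesgue_on S. \<bar>f x - T m (f x)\<bar> powr p) < e"
    using order_tendstoD(2)[OF Lp_truncation_tendsto[OF p f f_Lp] e]
    unfolding T_def by (auto simp: eventually_sequentially)
  obtain g where g: "\<And>j. continuous_on UNIV (g j)" and g_lim: "AE x in lebesgue_on S. (\<lambda>j. g j x) \<longlonglongrightarrow> f x"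
    using borel_measurable_lebesgue_on_AE_continuous_limit[OF fmeasurableD[OF S] f] by blast
  \<comment> \<open>truncating \<open>g j\<close> at the level \<open>m\<close> makes the convergence dominated\<close>
  define k where "k j x = T m (g j x)" for j x
  have k: "continuous_on UNIV (k j)" for j
    unfolding k_def T_def by (intro continuous_intros g)
  have [measurable]: "k j \<in> borel_measurable (lebesgue_on S)" for j
    using S k by (intro continuous_imp_measurable_on_sets_lebesgue) (auto intro: continuous_on_subset fmeasurableD)
  define w where "w x = 3 powr (p - 1) * (\<bar>f x\<bar> powr p + real m powr p)" for x
  have w: "integrable (lebesgue_on S) w"
    unfolding w_def using f_Lp by simp
  have dominated: "\<bar>f x - k j x\<bar> powr p \<le> w x" for j x
  proof -
    have "\<bar>f x - k j x\<bar> powr p \<le> \<bar>\<bar>f x\<bar> + real m + 0\<bar> powr p"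
      using p by (intro powr_mono2) (auto simp: k_def T_def)
    also have "\<dots> \<le> w x"
      using abs_add3_powr_le[OF p, of "\<bar>f x\<bar>" "real m" 0] p by (simp add: w_def)
    finally show ?thesis .
  qed
  have "AE x in lebesgue_on S. (\<lambda>j. \<bar>f x - k j x\<bar> powr p) \<longlonglongrightarrow> \<bar>f x - T m (f x)\<bar> powr p"
    using g_lim by eventually_elim (use p in \<open>auto simp: k_def T_def intro!: tendsto_intros\<close>)
  then have "(\<lambda>j. LINT x|lebesgue_on S. \<bar>f x - k j x\<bar> powr p) \<longlonglongrightarrow> (LINT x|lebesgue_on S. \<bar>f x - T m (f x)\<bar> powr p)"
    using w dominated unfolding T_def by (intro integral_dominated_convergence[where w=w]) auto
  from order_tendstoD(2)[OF this m] obtain j where "(LINT x|lebesgue_on S. \<bar>f x - k j x\<bar> powr p) < e"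
    by (auto simp: eventually_sequentially)
  moreover have "integrable (lebesgue_on S) (\<lambda>x. \<bar>f x - k j x\<bar> powr p)"
    using dominated by (intro Bochner_Integration.integrable_bound[OF w] AE_I2)
      (auto intro: order_trans[OF _ abs_ge_self])
  ultimately show ?thesis
    using that k by blast
qed

section \<open>Convergence in \<open>L\<^sup>p\<close>\<close>

lemma integral_abs_Cop_diff_powr_tendsto_continuous:
  fixes g :: "real ^ 'd::finite \<Rightarrow> real"
  assumes a: "a > 0" and p: "p \<ge> 1" and g: "continuous_on cube g"
  shows "(\<lambda>n. LINT x|lebesgue_on cube. \<bar>Cop a n g x - g x\<bar> powr p) \<longlonglongrightarrow> 0"
proof (rule LIMSEQ_I)
  fix e :: real assume e: "e > 0"
  have "(e / 2) powr (1 / p) > 0"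
    using e by simp
  from uniform_limit_Cop[OF a g, unfolded uniform_limit_sequentially_iff dist_real_def, rule_format, OF this]
  obtain N where N: "\<And>n x. n \<ge> N \<Longrightarrow> x \<in> cube \<Longrightarrow> \<bar>Cop a n g x - g x\<bar> < (e / 2) powr (1 / p)"
    by blast
  have "(LINT x|lebesgue_on cube. \<bar>Cop a n g x - g x\<bar> powr p) < e" if "n \<ge> N" for n
  proof -
    have "integrable (lebesgue_on cube) (\<lambda>x. \<bar>Cop a n g x - g x\<bar> powr p)"
      using p g by (intro integrable_abs_powr_continuous_on_cube continuous_intros) auto
    then have "(LINT x|lebesgue_on cube. \<bar>Cop a n g x - g x\<bar> powr p) \<le> (LINT x|lebesgue_on (cube :: (real ^ 'd) set). e / 2)"
    proof (rule integral_mono)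
      fix x :: "real ^ 'd" assume "x \<in> space (lebesgue_on cube)"
      then have "\<bar>Cop a n g x - g x\<bar> \<le> (e / 2) powr (1 / p)"
        using N[OF \<open>n \<ge> N\<close>, of x] by simp
      then have "\<bar>Cop a n g x - g x\<bar> powr p \<le> ((e / 2) powr (1 / p)) powr p"
        using p by (intro powr_mono2) auto
      then show "\<bar>Cop a n g x - g x\<bar> powr p \<le> e / 2"
        using e p by (simp add: powr_powr)
    qed (simp add: integrable_continuous_on_cube)
    then show ?thesis
      using e by simp
  qed
  then show "\<exists>N. \<forall>n\<ge>N. norm ((LINT x|lebesgue_on cube. \<bar>Cop a n g x - g x\<bar> powr p) - 0) < e"
    by (auto intro!: exI[of _ N])
qed

lemma integral_abs_Cop_diff_powr_le:
  fixes f g :: "real ^ 'd::finite \<Rightarrow> real"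
  assumes a: "a > 0" and p: "p \<ge> 1"
    and f: "f \<in> borel_measurable (lebesgue_on cube)"
    and f_Lp: "integrable (lebesgue_on cube) (\<lambda>x. \<bar>f x\<bar> powr p)"
    and g: "continuous_on cube g"
    and fg_Lp: "integrable (lebesgue_on cube) (\<lambda>x. \<bar>f x - g x\<bar> powr p)"
  shows "(LINT x|lebesgue_on cube. \<bar>Cop a n f x - f x\<bar> powr p)
    \<le> 3 powr (p - 1) * (((a + 1)\<^sup>2 / a) ^ CARD('d) * (LINT x|lebesgue_on cube. \<bar>f x - g x\<bar> powr p)
        + (LINT x|lebesgue_on cube. \<bar>Cop a n g x - g x\<bar> powr p) + (LINT x|lebesgue_on cube. \<bar>f x - g x\<bar> powr p))"
proof -
  note [measurable] = f borel_measurable_continuous_on_cube[OF g]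
  define \<phi> where "\<phi> x = f x - g x" for x
  define R where "R x = 3 powr (p - 1) * (\<bar>Cop a n \<phi> x\<bar> powr p + \<bar>Cop a n g x - g x\<bar> powr p + \<bar>f x - g x\<bar> powr p)" for x
  have int_Cop_\<phi>: "integrable (lebesgue_on cube) (\<lambda>x. \<bar>Cop a n \<phi> x\<bar> powr p)"
    and int_Cop_g: "integrable (lebesgue_on cube) (\<lambda>x. \<bar>Cop a n g x - g x\<bar> powr p)"
    using p g by (auto intro!: integrable_abs_powr_continuous_on_cube continuous_intros)
  then have int_R: "integrable (lebesgue_on cube) R"
    unfolding R_def using fg_Lp by simp
  have "Cop a n \<phi> x = Cop a n f x - Cop a n g x" for x
    unfolding \<phi>_def
    by (intro Cop_diff integrable_comp_subcube_map[OF a p _ f f_Lp] integrable_comp_subcube_map_continuous[OF a _ g])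
  then have split: "\<bar>Cop a n f x - f x\<bar> powr p \<le> R x" for x
    using abs_add3_powr_le[OF p, of "Cop a n \<phi> x" "Cop a n g x - g x" "g x - f x"]
    by (simp add: R_def abs_minus_commute)
  have "(\<lambda>x. \<bar>Cop a n f x - f x\<bar> powr p) \<in> borel_measurable (lebesgue_on cube)"
    using borel_measurable_continuous_on_cube[OF continuous_on_Cop] by measurable
  then have "integrable (lebesgue_on cube) (\<lambda>x. \<bar>Cop a n f x - f x\<bar> powr p)"
    using split by (intro Bochner_Integration.integrable_bound[OF int_R] AE_I2)
      (auto intro: order_trans[OF _ abs_ge_self])
  then have "(LINT x|lebesgue_on cube. \<bar>Cop a n f x - f x\<bar> powr p) \<le> (LINT x|lebesgue_on cube. R x)"
    using int_R split by (rule integral_mono)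
  also have "\<dots> = 3 powr (p - 1) * ((LINT x|lebesgue_on cube. \<bar>Cop a n \<phi> x\<bar> powr p)
        + (LINT x|lebesgue_on cube. \<bar>Cop a n g x - g x\<bar> powr p) + (LINT x|lebesgue_on cube. \<bar>f x - g x\<bar> powr p))"
    unfolding R_def using int_Cop_\<phi> int_Cop_g fg_Lp by simp
  also have "\<dots> \<le> 3 powr (p - 1) * (((a + 1)\<^sup>2 / a) ^ CARD('d) * (LINT x|lebesgue_on cube. \<bar>f x - g x\<bar> powr p)
        + (LINT x|lebesgue_on cube. \<bar>Cop a n g x - g x\<bar> powr p) + (LINT x|lebesgue_on cube. \<bar>f x - g x\<bar> powr p))"
    using integral_abs_Cop_powr_le[OF a p _ fg_Lp[folded \<phi>_def], of n] unfolding \<phi>_def by simp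
  finally show ?thesis .
qed

lemma LIMSEQ_zeroI_approx:
  fixes u :: "nat \<Rightarrow> real"
  assumes "\<And>e. e > 0 \<Longrightarrow> \<exists>v. v \<longlonglongrightarrow> 0 \<and> (\<forall>n. \<bar>u n\<bar> \<le> e + v n)"
  shows "u \<longlonglongrightarrow> 0"
proof (rule LIMSEQ_I)
  fix e :: real assume e: "e > 0"
  then obtain v where v: "v \<longlonglongrightarrow> 0" and u_le: "\<And>n. \<bar>u n\<bar> \<le> e / 2 + v n"
    using assms[of "e / 2"] by auto
  obtain N where "\<And>n. n \<ge> N \<Longrightarrow> v n < e / 2"
    using order_tendstoD(2)[OF v, of "e / 2"] e by (auto simp: eventually_sequentially)
  then have "\<bar>u n\<bar> < e" if "n \<ge> N" for n
    using u_le[of n] that by fastforce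
  then show "\<exists>N. \<forall>n\<ge>N. norm (u n - 0) < e"
    by auto
qed

theorem theorem4p1:
  fixes f :: "real ^ 'd::finite \<Rightarrow> real" and a p :: real
  assumes "a > 0" and "1 \<le> p"
    and "f \<in> borel_measurable (lebesgue_on cube)"
    and "integrable (lebesgue_on cube) (\<lambda>x. \<bar>f x\<bar> powr p)"
  shows "(\<lambda>n. LINT x|lebesgue_on cube. \<bar>Cop a n f x - f x\<bar> powr p) \<longlonglongrightarrow> 0"
proof (rule LIMSEQ_zeroI_approx)
  note a = assms(1) and p = assms(2) and f = assms(3) and f_Lp = assms(4)
  fix e :: real assume e: "e > 0"
  define c where "c = 3 powr (p - 1) * (((a + 1)\<^sup>2 / a) ^ CARD('d) + 1)"
  have c: "c > 0"
    using a by (simp add: c_def add_nonneg_pos)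
  from Lp_continuous_dense[OF lmeasurable_cube p f f_Lp divide_pos_pos[OF e c]]
  obtain g where g: "continuous_on UNIV g" and fg_Lp: "integrable (lebesgue_on cube) (\<lambda>x. \<bar>f x - g x\<bar> powr p)"
    and fg: "(LINT x|lebesgue_on cube. \<bar>f x - g x\<bar> powr p) < e / c"
    by blast
  have g_cube: "continuous_on cube g"
    using g by (rule continuous_on_subset) simp
  define X where "X = (LINT x|lebesgue_on cube. \<bar>f x - g x\<bar> powr p)"
  define Y where "Y n = 3 powr (p - 1) * (LINT x|lebesgue_on cube. \<bar>Cop a n g x - g x\<bar> powr p)" for n
  have bound: "(LINT x|lebesgue_on cube. \<bar>Cop a n f x - f x\<bar> powr p) \<le> c * X + Y n" for n
    using integral_abs_Cop_diff_powr_le[OF a p f f_Lp g_cube fg_Lp, of n]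
    by (simp add: c_def X_def Y_def algebra_simps)
  have "c * X < e"
    using fg c by (simp add: X_def field_simps)
  moreover have "0 \<le> (LINT x|lebesgue_on cube. \<bar>Cop a n f x - f x\<bar> powr p)" for n
    by (intro integral_nonneg_AE AE_I2) simp
  ultimately have "\<bar>LINT x|lebesgue_on cube. \<bar>Cop a n f x - f x\<bar> powr p\<bar> \<le> e + Y n" for n
    using bound[of n] by (simp add: abs_of_nonneg)
  moreover have "Y \<longlonglongrightarrow> 0"
    unfolding Y_def using integral_abs_Cop_diff_powr_tendsto_continuous[OF a p g_cube] by (rule tendsto_mult_right_zero)
  ultimately show "\<exists>v. v \<longlonglongrightarrow> 0 \<and> (\<forall>n. \<bar>LINT x|lebesgue_on cube. \<bar>Cop a n f x - f x\<bar> powr p\<bar> \<le> e + v n)"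
    by blast
qed

end
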